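(* Let $X$ be a quantity space over a field $K$. (1) $X/{\sim}$ is a free abelian group of finite rank. (2) Any two bases for $X/{\sim}$ have the same number of elements, any basis for $X$ has the same number of elements as any basis for $X/{\sim}$, and any two bases for $X$ have the same number of elements.
   Context: A scalable monoid over a field $K$ is a monoid $X$ (written multiplicatively, unit $\mathbf{1}=1_X$) with a map $K\times X\to X$, $(\alpha,x)\mapsto\alpha x$, such that $1x=x$, $\alpha(\beta x)=(\alpha\beta)x$, and $\alpha(xy)=(\alpha x)y=x(\alpha y)$ for all $\alpha,\beta\in K$, $x,y\in X$. It is commutative if $xy=yx$ for all $x,y$. For invertible $b$, $b^0=\mathbf{1}$ and negative powers are powers of $b^{-1}$. A (finite) basis of a commutative scalable monoid $X$ over $K$ is a finite set $B=\{b_1,\ldots,b_n\}$ of invertible elements of $X$ such that every $x\in X$ has an expansion $x=\mu\prod_{i=1}^n b_i^{k_i}$ with $\mu\in K$ and $k_1,\ldots,k_n\in\mathbb{Z}$, and this expansion is unique (i.e. $\mu$ and $(k_1,\ldots,k_n)$ are uniquely determined by $x$). A quantity space over $K$ is a commutative scalable monoid over $K$ that has a finite basis. Elements $x,y$ are commensurable, $x\sim y$, if $\alpha x=\beta y$ for some $\alpha,\beta\in K$; this is an equivalence relation and a congruence, its classes are called realms (dimensions), $[x]$ is the realm of $x$, and $X/{\sim}$ is the set of realms with product $[x][y]=[xy]$ and unit $[\mathbf{1}]$. A basis of $X/{\sim}$ is a finite set $\{c_1,\ldots,c_n\}\subseteq X/{\sim}$ such that every element of $X/{\sim}$ can be written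 uniquely as $\prod_{i=1}^n c_i^{k_i}$ with $k_i\in\mathbb{Z}$. *)

theory Defs
  imports "HOL-Algebra.Algebra"
begin



definition scalable_monoid :: "'x monoid \<Rightarrow> ('k::field \<Rightarrow> 'x \<Rightarrow> 'x) \<Rightarrow> bool" where
  "scalable_monoid Q smul \<longleftrightarrow> monoid Q
     \<and> (\<forall>a. \<forall>x\<in>carrier Q. smul a x \<in> carrier Q)
     \<and> (\<forall>x\<in>carrier Q. smul (1::'k) x = x)
     \<and> (\<forall>a b. \<forall>x\<in>carrier Q. smul a (smul b x) = smul (times a b) x)
     \<and> (\<forall>a. \<forall>x\<in>carrier Q. \<forall>y\<in>carrier Q.
           smul a (x \<otimes>\<^bsub>Q\<^esub> y) = (smul a x) \<otimes>\<^bsub>Q\<^esub> y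
         \<and> smul a (x \<otimes>\<^bsub>Q\<^esub> y) = x \<otimes>\<^bsub>Q\<^esub> (smul a y))"

definition comm_scalable_monoid :: "'x monoid \<Rightarrow> ('k::field \<Rightarrow> 'x \<Rightarrow> 'x) \<Rightarrow> bool" where
  "comm_scalable_monoid Q smul \<longleftrightarrow> scalable_monoid Q smul \<and> comm_monoid Q"



definition qs_basis :: "'x monoid \<Rightarrow> ('k::field \<Rightarrow> 'x \<Rightarrow> 'x) \<Rightarrow> 'x set \<Rightarrow> bool" where
  "qs_basis Q smul B \<longleftrightarrow> finite B \<and> B \<subseteq> Units Q
     \<and> (\<forall>x\<in>carrier Q. \<exists>!p :: 'k \<times> ('x \<Rightarrow> int).
            snd p \<in> extensional B
          \<and> x = smul (fst p) (finprod Q (\<lambda>b. b [^]\<^bsub>Q\<^esub> (snd p b)) B))"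

definition quantity_space :: "'x monoid \<Rightarrow> ('k::field \<Rightarrow> 'x \<Rightarrow> 'x) \<Rightarrow> bool" where
  "quantity_space Q smul \<longleftrightarrow> comm_scalable_monoid Q smul \<and> (\<exists>B. qs_basis Q smul B)"

definition commensurable :: "'x monoid \<Rightarrow> ('k::field \<Rightarrow> 'x \<Rightarrow> 'x) \<Rightarrow> 'x \<Rightarrow> 'x \<Rightarrow> bool" where
  "commensurable Q smul x y \<longleftrightarrow> (\<exists>a b. smul a x = smul b y)"

definition comm_rel :: "'x monoid \<Rightarrow> ('k::field \<Rightarrow> 'x \<Rightarrow> 'x) \<Rightarrow> ('x \<times> 'x) set" where
  "comm_rel Q smul = {(x, y). x \<in> carrier Q \<and> y \<in> carrier Q \<and> commensurable Q smul x y}"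



definition realm :: "'x monoid \<Rightarrow> ('k::field \<Rightarrow> 'x \<Rightarrow> 'x) \<Rightarrow> 'x \<Rightarrow> 'x set" where
  "realm Q smul x = comm_rel Q smul `` {x}"

definition realms :: "'x monoid \<Rightarrow> ('k::field \<Rightarrow> 'x \<Rightarrow> 'x) \<Rightarrow> 'x set monoid" where
  "realms Q smul =
     \<lparr> carrier = carrier Q // comm_rel Q smul,
       monoid.mult = (\<lambda>A B. \<Union>x\<in>A. \<Union>y\<in>B. realm Q smul (x \<otimes>\<^bsub>Q\<^esub> y)),
       one = realm Q smul \<one>\<^bsub>Q\<^esub> \<rparr>"



definition realms_basis :: "'x monoid \<Rightarrow> ('k::field \<Rightarrow> 'x \<Rightarrow> 'x) \<Rightarrow> 'x set set \<Rightarrow> bool" where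
  "realms_basis Q smul C \<longleftrightarrow> finite C \<and> C \<subseteq> carrier (realms Q smul)
     \<and> (\<forall>r\<in>carrier (realms Q smul). \<exists>!k :: 'x set \<Rightarrow> int. k \<in> extensional C
          \<and> r = finprod (realms Q smul) (\<lambda>c. c [^]\<^bsub>realms Q smul\<^esub> (k c)) C)"

end

theory Submission
  imports Defs
begin

text \<open>
  Every realm is the realm of a unit, since every quantity is a scalar multiple of a product of
  basis units; hence the realms form a commutative group, and the realm map sends a basis of the
  quantity space injectively onto a basis of the realms, because expansions in the basis are unique
  up to the scalar. It remains to see that all bases of a commutative group \<open>G\<close> have the same
  size: reducing coordinates modulo 2 identifies \<open>G/G\<^sup>2\<close> with the \<open>2\<^bsup>|C|\<^esup>\<close> parity vectors of
  any basis \<open>C\<close>, and \<open>G/G\<^sup>2\<close> does not depend on \<open>C\<close>.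
\<close>

text \<open>\<open>pow_nat\<close> makes the simplifier loop on integer powers.\<close>
declare pow_nat [simp del]

lemma card_image_eq_if_same_fibres:
  assumes "\<And>x y. x \<in> A \<Longrightarrow> y \<in> A \<Longrightarrow> f x = f y \<longleftrightarrow> g x = g y"
  shows "card (f ` A) = card (g ` A)"
proof -
  define P where "P = (\<lambda>a. (f a, g a)) ` A"
  have "inj_on fst P" "inj_on snd P"
    using assms by (auto simp: P_def inj_on_def)
  moreover have "fst ` P = f ` A" "snd ` P = g ` A"
    by (force simp: P_def)+
  ultimately show ?thesis by (metis card_image)
qed

definition power_prod :: "('a, 'b) monoid_scheme \<Rightarrow> 'a set \<Rightarrow> ('a \<Rightarrow> int) \<Rightarrow> 'a" where
  "power_prod G C k = finprod G (\<lambda>c. c [^]\<^bsub>G\<^esub> k c) C"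

definition group_basis :: "('a, 'b) monoid_scheme \<Rightarrow> 'a set \<Rightarrow> bool" where
  "group_basis G C \<longleftrightarrow> finite C \<and> C \<subseteq> carrier G
     \<and> (\<forall>r\<in>carrier G. \<exists>!k. k \<in> extensional C \<and> r = power_prod G C k)"

lemma (in monoid) Units_int_pow_closed:
  "u \<in> Units G \<Longrightarrow> u [^] (k::int) \<in> Units G"
  by (simp add: int_pow_def2 Units_pow_closed Units_inv_Units)

lemma (in comm_monoid) Units_finprod_closed:
  "f \<in> A \<rightarrow> Units G \<Longrightarrow> finprod G f A \<in> Units G"
proof (induction A rule: infinite_finite_induct)
  case (insert a A)
  then have "f \<in> insert a A \<rightarrow> carrier G" by blast
  with insert show ?case by simp
qed simp_all

lemma (in comm_monoid) power_prod_Units: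
  "C \<subseteq> Units G \<Longrightarrow> power_prod G C k \<in> Units G"
  unfolding power_prod_def by (intro Units_finprod_closed) (auto intro: Units_int_pow_closed)

lemma (in comm_monoid) power_prod_cong:
  assumes "C \<subseteq> Units G" "\<And>c. c \<in> C \<Longrightarrow> k c = l c"
  shows "power_prod G C k = power_prod G C l"
proof -
  have "(\<lambda>c. c [^] l c) \<in> C \<rightarrow> carrier G"
    using assms(1) Units_int_pow_closed Units_closed by blast
  then show ?thesis
    unfolding power_prod_def using assms(2) by (intro finprod_cong) (auto simp: simp_implies_def)
qed

lemma (in comm_monoid) power_prod_indicator:
  assumes "finite C" "C \<subseteq> Units G" "b \<in> C"
  shows "power_prod G C (\<lambda>c. if c = b then 1 else 0) = b"
proof -
  have "C \<subseteq> carrier G" using assms(2) by blast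
  then have "power_prod G C (\<lambda>c. if c = b then 1 else 0) = finprod G (\<lambda>c. if b = c then c else \<one>) C"
    unfolding power_prod_def by (intro finprod_cong) (auto simp: simp_implies_def int_pow_def2)
  also have "\<dots> = b" using assms by (intro finprod_singleton) auto
  finally show ?thesis .
qed

lemma (in comm_group) power_prod_mult:
  assumes "C \<subseteq> carrier G"
  shows "power_prod G C k \<otimes> power_prod G C l = power_prod G C (\<lambda>c. k c + l c)"
proof -
  have "power_prod G C (\<lambda>c. k c + l c) = finprod G (\<lambda>c. c [^] k c \<otimes> c [^] l c) C"
    unfolding power_prod_def using assms
    by (intro finprod_cong) (auto simp: int_pow_mult simp_implies_def subset_iff)
  also have "\<dots> = power_prod G C k \<otimes> power_prod G C l"
    unfolding power_prod_def by (rule finprod_multf) (use assms in auto)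
  finally show ?thesis by (rule sym)
qed

locale comm_group_basis = comm_group G for G (structure) +
  fixes C assumes group_basis: "group_basis G C"
begin

lemma finite_basis: "finite C" and basis_subset_carrier: "C \<subseteq> carrier G"
  using group_basis by (auto simp: group_basis_def)

definition coords :: "'a \<Rightarrow> 'a \<Rightarrow> int" where
  "coords r = (THE k. k \<in> extensional C \<and> r = power_prod G C k)"

lemma coords_ex1: "r \<in> carrier G \<Longrightarrow> \<exists>!k. k \<in> extensional C \<and> r = power_prod G C k"
  using group_basis by (auto simp: group_basis_def)

lemma power_prod_coords: "r \<in> carrier G \<Longrightarrow> power_prod G C (coords r) = r"
  using theI'[OF coords_ex1] unfolding coords_def by auto

lemma coords_unique: "r \<in> carrier G \<Longrightarrow> k \<in> extensional C \<Longrightarrow> r = power_prod G C k \<Longrightarrow> coords r = k"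
  unfolding coords_def by (rule the1_equality) (use coords_ex1 in auto)

lemma power_prod_closed: "power_prod G C k \<in> carrier G"
  using power_prod_Units basis_subset_carrier by simp

lemma coords_power_prod: "coords (power_prod G C k) = restrict k C"
  using basis_subset_carrier
  by (intro coords_unique power_prod_closed power_prod_cong) auto

definition parity :: "'a \<Rightarrow> 'a \<Rightarrow> bool" where
  "parity r = restrict (\<lambda>c. odd (coords r c)) C"

lemma parity_eq_iff:
  assumes r: "r \<in> carrier G" and s: "s \<in> carrier G"
  shows "parity r = parity s \<longleftrightarrow> (\<exists>f\<in>carrier G. r = s \<otimes> (f \<otimes> f))"
proof
  assume "\<exists>f\<in>carrier G. r = s \<otimes> (f \<otimes> f)"
  then obtain f where f: "f \<in> carrier G" "r = s \<otimes> (f \<otimes> f)" by blast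
  then have "r = power_prod G C (\<lambda>c. coords s c + (coords f c + coords f c))"
    using s basis_subset_carrier by (metis power_prod_coords power_prod_mult)
  then show "parity r = parity s"
    unfolding parity_def by (intro restrict_ext) (simp add: coords_power_prod)
next
  assume parity_eq: "parity r = parity s"
  define d where "d c = (coords r c - coords s c) div 2" for c
  have "even (coords r c - coords s c)" if "c \<in> C" for c
    using fun_cong[OF parity_eq, of c] that unfolding parity_def by auto
  then have coords_r: "power_prod G C (\<lambda>c. coords s c + (d c + d c)) = power_prod G C (coords r)"
    using basis_subset_carrier by (intro power_prod_cong) (auto simp: d_def elim!: evenE)
  have "s \<otimes> (power_prod G C d \<otimes> power_prod G C d)
      = power_prod G C (coords s) \<otimes> (power_prod G C d \<otimes> power_prod G C d)"
    using s by (simp only: power_prod_coords)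
  also have "\<dots> = power_prod G C (coords r)"
    using basis_subset_carrier coords_r by (simp only: power_prod_mult)
  also have "\<dots> = r"
    using r by (rule power_prod_coords)
  finally show "\<exists>f\<in>carrier G. r = s \<otimes> (f \<otimes> f)"
    using power_prod_closed by blast
qed

lemma parity_image: "parity ` carrier G = PiE C (\<lambda>_. UNIV)"
proof
  show "parity ` carrier G \<subseteq> PiE C (\<lambda>_. UNIV)"
    unfolding parity_def by auto
  show "PiE C (\<lambda>_. UNIV) \<subseteq> parity ` carrier G"
  proof
    fix h assume h: "h \<in> PiE C (\<lambda>_. UNIV :: bool set)"
    have "parity (power_prod G C (\<lambda>c. if h c then 1 else 0)) = h"
      unfolding parity_def coords_power_prod using h
      by (intro ext) (auto simp: PiE_def extensional_def)
    then show "h \<in> parity ` carrier G"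
      by (rule image_eqI[OF sym power_prod_closed])
  qed
qed

lemma card_parity_image: "card (parity ` carrier G) = 2 ^ card C"
  by (simp add: parity_image card_PiE finite_basis)

end

lemma group_basis_card_eq:
  assumes "comm_group G" "group_basis G C" "group_basis G C'"
  shows "card C = card C'"
proof -
  interpret C: comm_group_basis G C
    using assms by (simp add: comm_group_basis_def comm_group_basis_axioms_def)
  interpret C': comm_group_basis G C'
    using assms by (simp add: comm_group_basis_def comm_group_basis_axioms_def)
  have "card (C.parity ` carrier G) = card (C'.parity ` carrier G)"
    by (rule card_image_eq_if_same_fibres) (simp add: C.parity_eq_iff C'.parity_eq_iff)
  then have "(2::nat) ^ card C = 2 ^ card C'"
    by (simp add: C.card_parity_image C'.card_parity_image)
  then show ?thesis by simp
qed

lemma monoid_hom_finprod: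
  assumes G: "comm_monoid G" and H: "comm_monoid H"
    and h: "h \<in> hom G H" "h \<one>\<^bsub>G\<^esub> = \<one>\<^bsub>H\<^esub>" and f: "f \<in> A \<rightarrow> carrier G"
  shows "h (finprod G f A) = finprod H (\<lambda>a. h (f a)) A"
  using f
proof (induction A rule: infinite_finite_induct)
  case (insert a A)
  then have "f a \<in> carrier G" "f \<in> A \<rightarrow> carrier G" "(\<lambda>a. h (f a)) \<in> insert a A \<rightarrow> carrier H"
    using h(1) by (auto simp: hom_def)
  with insert G H h(1) show ?case
    by (simp add: comm_monoid.finprod_insert comm_monoid.finprod_closed hom_mult)
qed (use G H h(2) in \<open>simp_all add: comm_monoid.finprod_infinite comm_monoid.finprod_empty\<close>)

lemma monoid_hom_int_pow_Units:
  assumes G: "monoid G" and H: "group H"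
    and h: "h \<in> hom G H" "h \<one>\<^bsub>G\<^esub> = \<one>\<^bsub>H\<^esub>" and u: "u \<in> Units G"
  shows "h (u [^]\<^bsub>G\<^esub> (k::int)) = h u [^]\<^bsub>H\<^esub> k"
proof -
  have u_carrier: "u \<in> carrier G" using u by (simp add: Units_def)
  have nat_pow: "h (u [^]\<^bsub>G\<^esub> (n::nat)) = h u [^]\<^bsub>H\<^esub> n" for n
    by (induction n) (use G u_carrier h in \<open>simp_all add: monoid.nat_pow_closed hom_mult\<close>)
  have "h (inv\<^bsub>G\<^esub> (u [^]\<^bsub>G\<^esub> n)) = inv\<^bsub>H\<^esub> (h (u [^]\<^bsub>G\<^esub> n))" for n :: nat
  proof -
    have v: "u [^]\<^bsub>G\<^esub> n \<in> Units G" using G u by (rule monoid.Units_pow_closed)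
    then have "h (inv\<^bsub>G\<^esub> (u [^]\<^bsub>G\<^esub> n)) \<otimes>\<^bsub>H\<^esub> h (u [^]\<^bsub>G\<^esub> n)
        = h (inv\<^bsub>G\<^esub> (u [^]\<^bsub>G\<^esub> n) \<otimes>\<^bsub>G\<^esub> u [^]\<^bsub>G\<^esub> n)"
      using G h(1) by (simp add: hom_mult monoid.Units_inv_closed monoid.Units_closed)
    also have "\<dots> = \<one>\<^bsub>H\<^esub>"
      using G v h(2) by (simp add: monoid.Units_l_inv)
    finally have "h (inv\<^bsub>G\<^esub> (u [^]\<^bsub>G\<^esub> n)) \<otimes>\<^bsub>H\<^esub> h (u [^]\<^bsub>G\<^esub> n) = \<one>\<^bsub>H\<^esub>" .
    then show ?thesis
      using G H h(1) v by (intro group.inv_equality[symmetric])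
        (auto simp: hom_in_carrier monoid.Units_inv_closed monoid.Units_closed)
  qed
  then show ?thesis
    by (simp add: int_pow_def2 nat_pow)
qed

locale comm_scalable_monoid_loc =
  fixes Q :: "'x monoid" and smul :: "'k::field \<Rightarrow> 'x \<Rightarrow> 'x"
  assumes comm_scalable: "comm_scalable_monoid Q smul"
begin

sublocale Q: comm_monoid Q
  using comm_scalable by (simp add: comm_scalable_monoid_def)

lemma smul_closed: "x \<in> carrier Q \<Longrightarrow> smul a x \<in> carrier Q"
  and smul_one: "x \<in> carrier Q \<Longrightarrow> smul 1 x = x"
  and smul_smul: "x \<in> carrier Q \<Longrightarrow> smul a (smul b x) = smul (a * b) x"
  and smul_mult_left: "x \<in> carrier Q \<Longrightarrow> y \<in> carrier Q \<Longrightarrow> smul a (x \<otimes>\<^bsub>Q\<^esub> y) = smul a x \<otimes>\<^bsub>Q\<^esub> y"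
  and smul_mult_right: "x \<in> carrier Q \<Longrightarrow> y \<in> carrier Q \<Longrightarrow> smul a (x \<otimes>\<^bsub>Q\<^esub> y) = x \<otimes>\<^bsub>Q\<^esub> smul a y"
  using comm_scalable unfolding comm_scalable_monoid_def scalable_monoid_def by blast+

lemma smul_mult_smul:
  assumes "x \<in> carrier Q" "y \<in> carrier Q"
  shows "smul (a * c) (x \<otimes>\<^bsub>Q\<^esub> y) = smul a x \<otimes>\<^bsub>Q\<^esub> smul c y"
proof -
  have "smul (a * c) (x \<otimes>\<^bsub>Q\<^esub> y) = smul a (smul c (x \<otimes>\<^bsub>Q\<^esub> y))"
    using assms by (simp only: smul_smul Q.m_closed)
  also have "\<dots> = smul a (x \<otimes>\<^bsub>Q\<^esub> smul c y)"
    using assms by (simp only: smul_mult_right)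
  also have "\<dots> = smul a x \<otimes>\<^bsub>Q\<^esub> smul c y"
    using assms by (simp add: smul_closed smul_mult_left)
  finally show ?thesis .
qed

abbreviation R :: "'x set monoid" where "R \<equiv> realms Q smul"

lemma comm_rel_iff:
  "(x, y) \<in> comm_rel Q smul \<longleftrightarrow> x \<in> carrier Q \<and> y \<in> carrier Q \<and> (\<exists>a b. smul a x = smul b y)"
  by (simp add: comm_rel_def commensurable_def)

lemma equiv_comm_rel: "equiv (carrier Q) (comm_rel Q smul)"
proof (rule equivI)
  show "refl_on (carrier Q) (comm_rel Q smul)"
    by (auto simp: refl_on_def comm_rel_iff)
  show "sym (comm_rel Q smul)"
    unfolding sym_def comm_rel_iff by metis
  show "trans (comm_rel Q smul)"
    unfolding trans_def comm_rel_iff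
  proof (intro allI impI, elim conjE exE)
    fix x y z a b c d
    assume xyz: "x \<in> carrier Q" "y \<in> carrier Q" "z \<in> carrier Q"
      and xy: "smul a x = smul b y" and yz: "smul c y = smul d z"
    have "smul (c * a) x = smul c (smul a x)" using xyz by (simp add: smul_smul)
    also have "\<dots> = smul b (smul c y)" using xyz xy by (simp add: smul_smul mult.commute)
    also have "\<dots> = smul (b * d) z" using xyz yz by (simp add: smul_smul)
    finally show "x \<in> carrier Q \<and> z \<in> carrier Q \<and> (\<exists>a b. smul a x = smul b z)"
      using xyz by blast
  qed
qed (auto simp: comm_rel_iff)

lemma realm_eq_iff:
  "x \<in> carrier Q \<Longrightarrow> y \<in> carrier Q \<Longrightarrow> realm Q smul x = realm Q smul y \<longleftrightarrow> (x, y) \<in> comm_rel Q smul"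
  unfolding realm_def by (rule eq_equiv_class_iff[OF equiv_comm_rel])

lemma realm_smul: "x \<in> carrier Q \<Longrightarrow> realm Q smul (smul a x) = realm Q smul x"
  by (metis comm_rel_iff realm_eq_iff smul_closed smul_one)

lemma comm_rel_mult:
  assumes "(x, x') \<in> comm_rel Q smul" "(y, y') \<in> comm_rel Q smul"
  shows "(x \<otimes>\<^bsub>Q\<^esub> y, x' \<otimes>\<^bsub>Q\<^esub> y') \<in> comm_rel Q smul"
proof -
  obtain a b c d where carr: "x \<in> carrier Q" "x' \<in> carrier Q" "y \<in> carrier Q" "y' \<in> carrier Q"
    and xx': "smul a x = smul b x'" and yy': "smul c y = smul d y'"
    using assms unfolding comm_rel_iff by blast
  have "smul (a * c) (x \<otimes>\<^bsub>Q\<^esub> y) = smul a x \<otimes>\<^bsub>Q\<^esub> smul c y"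
    using carr by (simp add: smul_mult_smul)
  also have "\<dots> = smul (b * d) (x' \<otimes>\<^bsub>Q\<^esub> y')"
    using carr xx' yy' by (simp add: smul_mult_smul)
  finally show ?thesis
    using carr by (auto simp: comm_rel_iff)
qed

lemma realm_in_realms: "x \<in> carrier Q \<Longrightarrow> realm Q smul x \<in> carrier R"
  by (simp add: realms_def realm_def quotientI)

lemma realmsE:
  assumes "r \<in> carrier R" obtains x where "x \<in> carrier Q" "r = realm Q smul x"
  using assms by (auto simp: realms_def realm_def quotient_def)

lemma one_realms: "\<one>\<^bsub>R\<^esub> = realm Q smul \<one>\<^bsub>Q\<^esub>"
  by (simp add: realms_def)

lemma realm_mult:
  assumes x: "x \<in> carrier Q" and y: "y \<in> carrier Q"
  shows "realm Q smul x \<otimes>\<^bsub>R\<^esub> realm Q smul y = realm Q smul (x \<otimes>\<^bsub>Q\<^esub> y)"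
proof -
  have same: "realm Q smul (x' \<otimes>\<^bsub>Q\<^esub> y') = realm Q smul (x \<otimes>\<^bsub>Q\<^esub> y)"
    if "x' \<in> realm Q smul x" "y' \<in> realm Q smul y" for x' y'
  proof -
    have rel: "(x \<otimes>\<^bsub>Q\<^esub> y, x' \<otimes>\<^bsub>Q\<^esub> y') \<in> comm_rel Q smul"
      using that by (intro comm_rel_mult) (simp_all add: realm_def)
    then have "x \<otimes>\<^bsub>Q\<^esub> y \<in> carrier Q" "x' \<otimes>\<^bsub>Q\<^esub> y' \<in> carrier Q"
      by (simp_all add: comm_rel_iff)
    with rel show ?thesis
      by (simp add: realm_eq_iff[symmetric])
  qed
  have "x \<in> realm Q smul x" "y \<in> realm Q smul y"
    using x y by (auto simp: realm_def comm_rel_iff)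
  then have "(\<Union>x'\<in>realm Q smul x. \<Union>y'\<in>realm Q smul y. realm Q smul (x' \<otimes>\<^bsub>Q\<^esub> y'))
      = realm Q smul (x \<otimes>\<^bsub>Q\<^esub> y)"
    using same by blast
  then show ?thesis
    by (simp add: realms_def)
qed

lemma realms_comm_monoid: "comm_monoid R"
proof (rule comm_monoidI)
  fix r s t assume "r \<in> carrier R" "s \<in> carrier R" "t \<in> carrier R"
  then obtain x y z where "x \<in> carrier Q" "y \<in> carrier Q" "z \<in> carrier Q"
    "r = realm Q smul x" "s = realm Q smul y" "t = realm Q smul z"
    by (metis realmsE)
  then show "r \<otimes>\<^bsub>R\<^esub> s \<in> carrier R" "r \<otimes>\<^bsub>R\<^esub> s \<otimes>\<^bsub>R\<^esub> t = r \<otimes>\<^bsub>R\<^esub> (s \<otimes>\<^bsub>R\<^esub> t)"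
    "\<one>\<^bsub>R\<^esub> \<otimes>\<^bsub>R\<^esub> r = r" "r \<otimes>\<^bsub>R\<^esub> s = s \<otimes>\<^bsub>R\<^esub> r"
    by (simp_all add: realm_mult realm_in_realms one_realms Q.m_ac)
qed (simp add: one_realms realm_in_realms)

lemma realm_hom: "realm Q smul \<in> hom Q R"
  by (rule homI) (simp_all add: realm_in_realms realm_mult)

end

lemma qs_basis_finite: "qs_basis Q smul B \<Longrightarrow> finite B"
  and qs_basis_subset_Units: "qs_basis Q smul B \<Longrightarrow> B \<subseteq> Units Q"
  by (simp_all add: qs_basis_def)

locale quantity_space_loc =
  fixes Q :: "'x monoid" and smul :: "'k::field \<Rightarrow> 'x \<Rightarrow> 'x"
  assumes quantity_space: "quantity_space Q smul"
begin

sublocale comm_scalable_monoid_loc Q smul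
  using quantity_space by unfold_locales (simp add: quantity_space_def)

lemma qs_basis_expansion:
  assumes "qs_basis Q smul B" "x \<in> carrier Q"
  obtains a k where "k \<in> extensional B" "x = smul a (power_prod Q B k)"
  using assms unfolding qs_basis_def power_prod_def by (metis prod.collapse)

lemma qs_basis_expansion_unique:
  assumes B: "qs_basis Q smul B" and k: "k \<in> extensional B" and l: "l \<in> extensional B"
    and eq: "smul a (power_prod Q B k) = smul b (power_prod Q B l)"
  shows "k = l"
proof -
  have "smul a (power_prod Q B k) \<in> carrier Q"
    using B qs_basis_subset_Units Q.power_prod_Units smul_closed by blast
  then have "\<exists>!p :: 'k \<times> ('x \<Rightarrow> int). snd p \<in> extensional B
      \<and> smul a (power_prod Q B k) = smul (fst p) (power_prod Q B (snd p))"
    using B unfolding qs_basis_def power_prod_def by blast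
  then have "(a, k) = (b, l)"
    using k l eq by (metis fst_conv snd_conv)
  then show ?thesis by simp
qed

lemma smul_Unit_expansion:
  assumes "x \<in> carrier Q" obtains a u where "u \<in> Units Q" "x = smul a u"
proof -
  obtain B where B: "qs_basis Q smul B"
    using quantity_space by (auto simp: quantity_space_def)
  then obtain a k where x: "x = smul a (power_prod Q B k)"
    using assms by (rule qs_basis_expansion)
  have "power_prod Q B k \<in> Units Q"
    using qs_basis_subset_Units[OF B] by (rule Q.power_prod_Units)
  then show ?thesis
    using x by (rule that)
qed

lemma realms_comm_group: "comm_group R"
proof -
  interpret R: comm_monoid R by (rule realms_comm_monoid)
  have "\<exists>s\<in>carrier R. s \<otimes>\<^bsub>R\<^esub> r = \<one>\<^bsub>R\<^esub>" if "r \<in> carrier R" for r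
  proof -
    obtain x where x: "x \<in> carrier Q" "r = realm Q smul x"
      using \<open>r \<in> carrier R\<close> by (rule realmsE)
    obtain a u where u: "u \<in> Units Q" "x = smul a u"
      using x(1) by (rule smul_Unit_expansion)
    have "realm Q smul (inv\<^bsub>Q\<^esub> u) \<otimes>\<^bsub>R\<^esub> r = realm Q smul (inv\<^bsub>Q\<^esub> u \<otimes>\<^bsub>Q\<^esub> smul a u)"
      using x u by (simp add: realm_mult smul_closed)
    also have "\<dots> = realm Q smul (smul a (inv\<^bsub>Q\<^esub> u \<otimes>\<^bsub>Q\<^esub> u))"
      using u by (metis smul_mult_right Q.Units_closed Q.Units_inv_closed)
    also have "\<dots> = \<one>\<^bsub>R\<^esub>"
      using u by (simp add: realm_smul one_realms)
    finally show ?thesis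
      using u realm_in_realms by blast
  qed
  then show ?thesis
    by (intro comm_group.intro realms_comm_monoid R.group_l_invI)
qed

sublocale R: comm_group R by (rule realms_comm_group)

lemma realm_int_pow_Units:
  "u \<in> Units Q \<Longrightarrow> realm Q smul (u [^]\<^bsub>Q\<^esub> (k::int)) = realm Q smul u [^]\<^bsub>R\<^esub> k"
  by (rule monoid_hom_int_pow_Units[OF Q.monoid_axioms R.group_axioms realm_hom])
    (simp_all add: one_realms)

lemma realm_finprod:
  "f \<in> A \<rightarrow> carrier Q \<Longrightarrow> realm Q smul (finprod Q f A) = finprod R (\<lambda>a. realm Q smul (f a)) A"
  by (rule monoid_hom_finprod[OF Q.comm_monoid_axioms R.comm_monoid_axioms realm_hom])
    (simp_all add: one_realms)

lemma realm_power_prod: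
  assumes B: "B \<subseteq> Units Q" and inj: "inj_on (realm Q smul) B"
  shows "power_prod R (realm Q smul ` B) K = realm Q smul (power_prod Q B (\<lambda>b. K (realm Q smul b)))"
proof -
  have B_carrier: "B \<subseteq> carrier Q" using B by blast
  have "power_prod R (realm Q smul ` B) K = finprod R (\<lambda>b. realm Q smul b [^]\<^bsub>R\<^esub> K (realm Q smul b)) B"
    unfolding power_prod_def using B_carrier inj realm_in_realms
    by (intro R.finprod_reindex) auto
  also have "\<dots> = finprod R (\<lambda>b. realm Q smul (b [^]\<^bsub>Q\<^esub> K (realm Q smul b))) B"
    using B B_carrier realm_in_realms
    by (intro R.finprod_cong) (auto simp: simp_implies_def realm_int_pow_Units)
  also have "\<dots> = realm Q smul (power_prod Q B (\<lambda>b. K (realm Q smul b)))"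
    unfolding power_prod_def using B Q.Units_int_pow_closed
    by (intro realm_finprod[symmetric]) blast
  finally show ?thesis .
qed

lemma qs_basis_coords_eq_if_realm_eq:
  assumes B: "qs_basis Q smul B"
    and eq: "realm Q smul (power_prod Q B k) = realm Q smul (power_prod Q B l)"
  shows "\<forall>b\<in>B. k b = l b"
proof -
  have BU: "B \<subseteq> Units Q" using B by (rule qs_basis_subset_Units)
  have restrict: "power_prod Q B (restrict k B) = power_prod Q B k"
    "power_prod Q B (restrict l B) = power_prod Q B l"
    using BU by (auto intro: Q.power_prod_cong)
  have "power_prod Q B k \<in> carrier Q" "power_prod Q B l \<in> carrier Q"
    using BU Q.power_prod_Units by blast+
  then obtain a b
    where ab: "smul a (power_prod Q B (restrict k B)) = smul b (power_prod Q B (restrict l B))"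
    using eq by (auto simp: realm_eq_iff comm_rel_iff restrict)
  have "restrict k B = restrict l B"
    by (rule qs_basis_expansion_unique[OF B _ _ ab]) auto
  then show ?thesis
    by (metis restrict_apply')
qed

lemma inj_on_realm_qs_basis:
  assumes B: "qs_basis Q smul B" shows "inj_on (realm Q smul) B"
proof (rule inj_onI)
  fix b b' assume bb': "b \<in> B" "b' \<in> B" and "realm Q smul b = realm Q smul b'"
  then have "realm Q smul (power_prod Q B (\<lambda>c. if c = b then 1 else 0))
      = realm Q smul (power_prod Q B (\<lambda>c. if c = b' then 1 else 0))"
    using qs_basis_finite[OF B] qs_basis_subset_Units[OF B] by (simp add: Q.power_prod_indicator)
  then have "\<forall>c\<in>B. (if c = b then 1 else 0 :: int) = (if c = b' then 1 else 0)"
    by (rule qs_basis_coords_eq_if_realm_eq[OF B])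
  then show "b = b'"
    using bb' by (metis zero_neq_one)
qed

lemma group_basis_realms_image:
  assumes B: "qs_basis Q smul B" shows "group_basis R (realm Q smul ` B)"
  unfolding group_basis_def
proof (intro conjI ballI)
  have BU: "B \<subseteq> Units Q" using B by (rule qs_basis_subset_Units)
  have inj: "inj_on (realm Q smul) B" using B by (rule inj_on_realm_qs_basis)
  show "finite (realm Q smul ` B)" using B qs_basis_finite by blast
  show "realm Q smul ` B \<subseteq> carrier R" using BU realm_in_realms by blast
  fix r assume "r \<in> carrier R"
  then obtain x where x: "x \<in> carrier Q" "r = realm Q smul x" by (rule realmsE)
  then obtain a k where k: "x = smul a (power_prod Q B k)"
    using B qs_basis_expansion by blast
  define K where "K = restrict (\<lambda>c. k (inv_into B (realm Q smul) c)) (realm Q smul ` B)"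
  have "power_prod Q B (\<lambda>b. K (realm Q smul b)) = power_prod Q B k"
    using BU inj by (intro Q.power_prod_cong) (simp_all add: K_def)
  moreover have "power_prod Q B k \<in> carrier Q"
    using BU Q.power_prod_Units by blast
  ultimately have "r = power_prod R (realm Q smul ` B) K"
    using x k by (simp add: realm_power_prod[OF BU inj] realm_smul)
  moreover have "L = K"
    if "L \<in> extensional (realm Q smul ` B)" "r = power_prod R (realm Q smul ` B) L" for L
  proof -
    have "realm Q smul (power_prod Q B (\<lambda>b. L (realm Q smul b)))
        = realm Q smul (power_prod Q B (\<lambda>b. K (realm Q smul b)))"
      using that \<open>r = power_prod R (realm Q smul ` B) K\<close> by (simp add: realm_power_prod[OF BU inj])
    then have "\<forall>b\<in>B. L (realm Q smul b) = K (realm Q smul b)"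
      by (rule qs_basis_coords_eq_if_realm_eq[OF B])
    then show "L = K"
      using that(1) by (intro extensionalityI[of _ "realm Q smul ` B"]) (auto simp: K_def)
  qed
  ultimately show "\<exists>!K. K \<in> extensional (realm Q smul ` B) \<and> r = power_prod R (realm Q smul ` B) K"
    by (auto simp: K_def)
qed

end

theorem mainTheorem15:
  fixes Q :: "'x monoid" and smul :: "'k::field \<Rightarrow> 'x \<Rightarrow> 'x"
  assumes "quantity_space Q smul"
  shows "(comm_group (realms Q smul) \<and> (\<exists>C. realms_basis Q smul C))
       \<and> (\<forall>C C'. realms_basis Q smul C \<longrightarrow> realms_basis Q smul C' \<longrightarrow> card C = card C')
       \<and> (\<forall>B C. qs_basis Q smul B \<longrightarrow> realms_basis Q smul C \<longrightarrow> card B = card C)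
       \<and> (\<forall>B B'. qs_basis Q smul B \<longrightarrow> qs_basis Q smul B' \<longrightarrow> card B = card B')"
proof -
  interpret quantity_space_loc Q smul
    using assms by (rule quantity_space_loc.intro)
  have realms_basis_iff: "realms_basis Q smul C \<longleftrightarrow> group_basis (realms Q smul) C" for C
    by (simp add: realms_basis_def group_basis_def power_prod_def)
  have realms_card: "card C = card C'" if "realms_basis Q smul C" "realms_basis Q smul C'" for C C'
    using that unfolding realms_basis_iff by (rule group_basis_card_eq[OF realms_comm_group])
  have image_basis: "realms_basis Q smul (realm Q smul ` B)" if "qs_basis Q smul B" for B
    using that unfolding realms_basis_iff by (rule group_basis_realms_image)
  have qs_card: "card B = card C" if B: "qs_basis Q smul B" and C: "realms_basis Q smul C" for B C
    using inj_on_realm_qs_basis[OF B] realms_card[OF image_basis[OF B] C] by (simp add: card_image)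
  obtain B where B: "qs_basis Q smul B"
    using assms by (auto simp: quantity_space_def)
  show ?thesis
  proof (intro conjI allI impI)
    show "comm_group (realms Q smul)" by (rule realms_comm_group)
    show "\<exists>C. realms_basis Q smul C" using image_basis[OF B] ..
  next
    fix C C' assume "realms_basis Q smul C" "realms_basis Q smul C'"
    then show "card C = card C'" by (rule realms_card)
  next
    fix B' C assume "qs_basis Q smul B'" "realms_basis Q smul C"
    then show "card B' = card C" by (rule qs_card)
  next
    fix B1 B2 assume "qs_basis Q smul B1" "qs_basis Q smul B2"
    then show "card B1 = card B2" using qs_card image_basis by metis
  qed
qed

end
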